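(* Let $A\in\mathbb{C}^{n\times n}$ and $r\in\mathbb{R}$. Then the vertically projected Davis-Wielandt shell $\mathcal{W}_{\ge r}(A)$ is compact and convex.
   Context: The Davis-Wielandt shell of $A$ is $\mathcal{DW}(A)=\{(\mathrm{Re}\,x^*Ax,\ \mathrm{Im}\,x^*Ax,\ \|Ax\|^2): x\in\mathbb{C}^n,\|x\|=1\}\subset\mathbb{R}^3$. For $r\in\mathbb{R}$, the vertically projected DW-shell is $\mathcal{W}_{\ge r}(A)=\{(p,q)\in\mathbb{R}^2: (p,q,h^2)\in\mathcal{DW}(A)\text{ for some } h\ge r\}$ (it is empty when $r$ exceeds the largest singular value of $A$). *)

theory Defs
  imports "HOL-Analysis.Analysis"
begin

definition cquad_form :: "complex^'n^'n \<Rightarrow> complex^'n \<Rightarrow> complex" where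
  "cquad_form A x = (\<Sum>i\<in>UNIV. cnj (x $ i) * (A *v x) $ i)"

definition DW_shell :: "complex^'n^'n \<Rightarrow> (real \<times> real \<times> real) set" where
  "DW_shell A = {(Re (cquad_form A x), Im (cquad_form A x), (norm (A *v x))\<^sup>2) | x. norm x = 1}"

definition W_ge :: "real \<Rightarrow> complex^'n^'n \<Rightarrow> (real \<times> real) set" where
  "W_ge r A = {(p, q). \<exists>h. h \<ge> r \<and> (p, q, h\<^sup>2) \<in> DW_shell A}"

end

theory Submission
  imports Defs
begin

(*
  W_ge r A is the image of the compact set of unit vectors x with norm (A x) >= r under the
  continuous map x |-> x^* A x, read as a point of R^2; hence it is compact.

  For convexity take two such unit vectors x, y and an orthonormal pair e1, e2 spanning a plane
  that contains them. For a unit vector w = a e1 + b e2, both w^* A w and norm (A w)^2 are affine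
  functions of the Bloch coordinates (|a|^2, conj a * b) in R x C, and these coordinates run over
  the 2-sphere of radius 1/2 about (1/2, 0). A convex combination of the Bloch points of x and y
  lies in the closed ball. The linear part of w^* A w maps R^3 to C = R^2, so it has a nonzero
  kernel, and moving along a kernel direction in which norm (A w)^2 does not decrease reaches the
  sphere. The unit vector w found there realises the convex combination of the two numerical-range
  points and has norm (A w)^2 >= (1 - t) norm (A x)^2 + t norm (A y)^2 >= r^2.
*)

lemma linear_exists_nonzero_kernel:
  fixes F :: "'a::euclidean_space \<Rightarrow> 'b::euclidean_space"
  assumes "linear F" and "DIM('b) < DIM('a)"
  obtains d where "d \<noteq> 0" and "F d = 0"
proof -
  have "\<not> inj F"
  proof
    assume "inj F"
    then have "dim (range F) = dim (UNIV :: 'a set)"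
      using dim_image_eq[OF assms(1)] by (metis inj_on_subset subset_UNIV)
    moreover have "dim (range F) \<le> DIM('b)"
      by (rule dim_subset_UNIV)
    ultimately show False
      using assms(2) by simp
  qed
  then show thesis
    using that linear_injective_0[OF assms(1)] by blast
qed

lemma sphere_point_in_fibre_above:
  fixes F :: "'a::euclidean_space \<Rightarrow> 'b::euclidean_space" and G :: "'a \<Rightarrow> real"
  assumes "linear F" and "linear G" and "DIM('b) < DIM('a)" and "s0 \<in> cball c \<rho>"
  obtains s where "s \<in> sphere c \<rho>" and "F s = F s0" and "G s0 \<le> G s"
proof -
  obtain d0 where "d0 \<noteq> 0" "F d0 = 0"
    using linear_exists_nonzero_kernel[OF assms(1,3)] .
  define d where "d = (if 0 \<le> G d0 then d0 else - d0)"
  have d: "d \<noteq> 0" "F d = 0" "0 \<le> G d"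
    using \<open>d0 \<noteq> 0\<close> \<open>F d0 = 0\<close> linear_neg[OF assms(1)] linear_neg[OF assms(2)]
    by (auto simp: d_def)
  define L where "L = (\<rho> + dist c s0) / norm d"
  have "L * norm d = \<rho> + dist c s0"
    using d(1) by (simp add: L_def)
  moreover have "0 \<le> L"
    using assms(4) unfolding L_def mem_cball
    by (metis add_increasing2 divide_nonneg_nonneg norm_ge_zero order_trans zero_le_dist)
  moreover have "dist (s0 + L *\<^sub>R d) s0 \<le> dist c (s0 + L *\<^sub>R d) + dist c s0"
    by (rule dist_triangle3)
  ultimately have "\<rho> \<le> dist c (s0 + L *\<^sub>R d)"
    by (simp add: dist_norm)
  moreover have "dist c (s0 + 0 *\<^sub>R d) \<le> \<rho>"
    using assms(4) by simp
  moreover have "continuous_on {0..L} (\<lambda>l. dist c (s0 + l *\<^sub>R d))"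
    by (intro continuous_intros)
  ultimately obtain l where "0 \<le> l" "dist c (s0 + l *\<^sub>R d) = \<rho>"
    using IVT'[of "\<lambda>l. dist c (s0 + l *\<^sub>R d)" 0 \<rho> L] \<open>0 \<le> L\<close> by auto
  show thesis
  proof
    show "s0 + l *\<^sub>R d \<in> sphere c \<rho>"
      using \<open>dist c (s0 + l *\<^sub>R d) = \<rho>\<close> by simp
    show "F (s0 + l *\<^sub>R d) = F s0"
      using d(2) by (simp add: linear_add[OF assms(1)] linear_scale[OF assms(1)])
    show "G s0 \<le> G (s0 + l *\<^sub>R d)"
      using d(3) \<open>0 \<le> l\<close> by (simp add: linear_add[OF assms(2)] linear_scale[OF assms(2)])
  qed
qed

definition cinner :: "complex^'n \<Rightarrow> complex^'n \<Rightarrow> complex" where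
  "cinner u v = (\<Sum>i\<in>UNIV. cnj (u $ i) * v $ i)"

lemma cquad_form_eq_cinner: "cquad_form A x = cinner x (A *v x)"
  by (simp add: cquad_form_def cinner_def)

lemma cinner_commute: "cinner v u = cnj (cinner u v)"
  by (simp add: cinner_def cnj_sum mult.commute)

lemma cinner_add_left: "cinner (u + v) w = cinner u w + cinner v w"
  by (simp add: cinner_def sum.distrib algebra_simps)

lemma cinner_add_right: "cinner w (u + v) = cinner w u + cinner w v"
  by (simp add: cinner_def sum.distrib algebra_simps)

lemma cinner_smult_left: "cinner (c *s u) v = cnj c * cinner u v"
  by (simp add: cinner_def sum_distrib_left algebra_simps)

lemma cinner_smult_right: "cinner u (c *s v) = c * cinner u v"
  by (simp add: cinner_def sum_distrib_left algebra_simps)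

lemma cinner_self: "cinner u u = of_real ((norm u)\<^sup>2)"
proof -
  have "(norm u)\<^sup>2 = (\<Sum>i\<in>UNIV. (cmod (u $ i))\<^sup>2)"
    unfolding norm_vec_def L2_set_def by (simp add: sum_nonneg)
  then have "of_real ((norm u)\<^sup>2) = (\<Sum>i\<in>UNIV. complex_of_real ((cmod (u $ i))\<^sup>2))"
    by simp
  then show ?thesis
    unfolding cinner_def complex_norm_square by (simp add: mult.commute)
qed

lemma norm_smult_vec: "norm (c *s u) = cmod c * norm u"
proof -
  have "of_real ((norm (c *s u))\<^sup>2) = (of_real ((cmod c * norm u)\<^sup>2) :: complex)"
    unfolding cinner_self[symmetric] cinner_smult_left cinner_smult_right
    by (simp add: cinner_self power_mult_distrib complex_norm_square mult.commute flip: of_real_power)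
  then have "(norm (c *s u))\<^sup>2 = (cmod c * norm u)\<^sup>2"
    by (simp only: of_real_eq_iff)
  then show ?thesis
    by (simp add: power2_eq_iff_nonneg)
qed

definition bloch_coords :: "complex \<Rightarrow> complex \<Rightarrow> real \<times> complex" where
  "bloch_coords a b = ((cmod a)\<^sup>2, cnj a * b)"

lemma dist_bloch_center: "dist (1/2, 0) (p, z) = 1/2 \<longleftrightarrow> (cmod z)\<^sup>2 = p * (1 - p)"
proof -
  have "dist (1/2, 0) (p, z) = sqrt ((1/2 - p)\<^sup>2 + (cmod z)\<^sup>2)"
    by (simp add: dist_norm norm_Pair)
  moreover have "sqrt (1/4) = 1/2"
    by (rule real_sqrt_unique) (simp_all add: power2_eq_square)
  ultimately have "dist (1/2, 0) (p, z) = 1/2 \<longleftrightarrow> (1/2 - p)\<^sup>2 + (cmod z)\<^sup>2 = 1/4"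
    by (metis real_sqrt_eq_iff)
  then show ?thesis
    by (auto simp: power2_eq_square algebra_simps)
qed

lemma bloch_coords_in_sphere:
  assumes "(cmod a)\<^sup>2 + (cmod b)\<^sup>2 = 1"
  shows "bloch_coords a b \<in> sphere (1/2, 0) (1/2)"
proof -
  have "(cmod b)\<^sup>2 = 1 - (cmod a)\<^sup>2"
    using assms by simp
  then show ?thesis
    unfolding mem_sphere bloch_coords_def dist_bloch_center
    by (simp add: norm_mult power_mult_distrib)
qed

lemma bloch_coords_onto_sphere:
  assumes "s \<in> sphere (1/2, 0) (1/2)"
  obtains a b where "(cmod a)\<^sup>2 + (cmod b)\<^sup>2 = 1" and "bloch_coords a b = s"
proof -
  obtain p z where s: "s = (p, z)"
    by (cases s)
  have z: "(cmod z)\<^sup>2 = p * (1 - p)"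
    using assms unfolding s mem_sphere dist_bloch_center .
  then have "0 \<le> p"
    by (smt (verit) mult_neg_pos zero_le_power2)
  show thesis
  proof (cases "p = 0")
    case True
    then show thesis
      using z by (intro that[of 0 1]) (simp_all add: s bloch_coords_def)
  next
    case False
    with \<open>0 \<le> p\<close> have "0 < p"
      by simp
    show thesis
    proof (rule that[of "of_real (sqrt p)" "z / of_real (sqrt p)"])
      show "(cmod (of_real (sqrt p)))\<^sup>2 + (cmod (z / of_real (sqrt p)))\<^sup>2 = 1"
        using \<open>0 < p\<close> z by (simp add: norm_divide power_divide)
      show "bloch_coords (of_real (sqrt p)) (z / of_real (sqrt p)) = s"
        using \<open>0 < p\<close> by (simp add: s bloch_coords_def)
    qed
  qed
qed

definition bloch_form ::
    "complex^'n \<Rightarrow> complex^'n \<Rightarrow> complex^'n \<Rightarrow> complex^'n \<Rightarrow> real \<times> complex \<Rightarrow> complex" where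
  "bloch_form u1 u2 v1 v2 s = of_real (fst s) * cinner u1 v1 + snd s * cinner u1 v2
     + cnj (snd s) * cinner u2 v1 + of_real (1 - fst s) * cinner u2 v2"

lemma cinner_eq_bloch_form:
  assumes "(cmod a)\<^sup>2 + (cmod b)\<^sup>2 = 1"
  shows "cinner (a *s u1 + b *s u2) (a *s v1 + b *s v2) = bloch_form u1 u2 v1 v2 (bloch_coords a b)"
proof -
  have "1 - (cmod a)\<^sup>2 = (cmod b)\<^sup>2"
    using assms by simp
  then have a: "of_real ((cmod a)\<^sup>2) = cnj a * a" and b: "of_real (1 - (cmod a)\<^sup>2) = cnj b * b"
    by (simp_all add: complex_norm_square mult.commute flip: of_real_power)
  show ?thesis
    unfolding bloch_form_def bloch_coords_def fst_conv snd_conv a b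
    by (simp add: cinner_add_left cinner_add_right cinner_smult_left cinner_smult_right algebra_simps)
qed

lemma bloch_form_convex_combination:
  "bloch_form u1 u2 v1 v2 ((1 - t) *\<^sub>R s + t *\<^sub>R s') =
     of_real (1 - t) * bloch_form u1 u2 v1 v2 s + of_real t * bloch_form u1 u2 v1 v2 s'"
  by (simp add: bloch_form_def scaleR_conv_of_real algebra_simps)

lemma linear_bloch_form_diff: "linear (\<lambda>s. bloch_form u1 u2 v1 v2 s - bloch_form u1 u2 v1 v2 0)"
  by (rule linearI) (simp_all add: bloch_form_def scaleR_conv_of_real algebra_simps)

lemma matrix_vector_mult_smult_add:
  fixes A :: "'a::field^'n^'m"
  shows "A *v (a *s u + b *s v) = a *s (A *v u) + b *s (A *v v)"
  by (simp add: matrix_vector_right_distrib vector_scalar_commute)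

lemma cquad_form_eq_bloch_form:
  assumes "(cmod a)\<^sup>2 + (cmod b)\<^sup>2 = 1"
  shows "cquad_form A (a *s e1 + b *s e2) = bloch_form e1 e2 (A *v e1) (A *v e2) (bloch_coords a b)"
  using assms by (simp add: cquad_form_eq_cinner matrix_vector_mult_smult_add cinner_eq_bloch_form)

lemma norm_matrix_vector_eq_bloch_form:
  assumes "(cmod a)\<^sup>2 + (cmod b)\<^sup>2 = 1"
  shows "(norm (A *v (a *s e1 + b *s e2)))\<^sup>2 =
    Re (bloch_form (A *v e1) (A *v e2) (A *v e1) (A *v e2) (bloch_coords a b))"
  using assms cinner_self[of "A *v (a *s e1 + b *s e2)"]
  by (simp add: matrix_vector_mult_smult_add cinner_eq_bloch_form)

lemma norm_orthonormal_combination: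
  assumes "cinner e1 e1 = 1" and "cinner e2 e2 = 1" and "cinner e1 e2 = 0"
  shows "(norm (a *s e1 + b *s e2))\<^sup>2 = (cmod a)\<^sup>2 + (cmod b)\<^sup>2"
proof -
  have "cinner e2 e1 = 0"
    using assms(3) cinner_commute[of e2 e1] by simp
  then have "cinner (a *s e1 + b *s e2) (a *s e1 + b *s e2) = of_real ((cmod a)\<^sup>2 + (cmod b)\<^sup>2)"
    using assms by (simp add: cinner_add_left cinner_add_right cinner_smult_left cinner_smult_right
        complex_norm_square mult.commute flip: of_real_power)
  then show ?thesis
    by (metis cinner_self of_real_eq_iff)
qed

lemma orthonormal_span_interpolation:
  fixes A :: "complex^'n^'n"
  assumes e: "cinner e1 e1 = 1" "cinner e2 e2 = 1" "cinner e1 e2 = 0"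
    and x: "x = a1 *s e1 + b1 *s e2" "(cmod a1)\<^sup>2 + (cmod b1)\<^sup>2 = 1"
    and y: "y = a2 *s e1 + b2 *s e2" "(cmod a2)\<^sup>2 + (cmod b2)\<^sup>2 = 1"
    and t: "0 \<le> t" "t \<le> 1"
  obtains w where "norm w = 1"
    and "cquad_form A w = of_real (1 - t) * cquad_form A x + of_real t * cquad_form A y"
    and "(1 - t) * (norm (A *v x))\<^sup>2 + t * (norm (A *v y))\<^sup>2 \<le> (norm (A *v w))\<^sup>2"
proof -
  define Q where "Q = bloch_form e1 e2 (A *v e1) (A *v e2)"
  define N where "N = bloch_form (A *v e1) (A *v e2) (A *v e1) (A *v e2)"
  define s0 where "s0 = (1 - t) *\<^sub>R bloch_coords a1 b1 + t *\<^sub>R bloch_coords a2 b2"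
  have "s0 \<in> cball (1/2, 0) (1/2)"
    unfolding s0_def using bloch_coords_in_sphere[OF x(2)] bloch_coords_in_sphere[OF y(2)] t
    by (intro convexD_alt[OF convex_cball]) auto
  moreover have "linear (\<lambda>s. Re (N s - N 0))"
    using linear_compose[OF linear_bloch_form_diff bounded_linear.linear[OF bounded_linear_Re]]
    by (simp add: N_def o_def)
  moreover have "DIM(complex) < DIM(real \<times> complex)"
    by simp
  ultimately obtain s where s: "s \<in> sphere (1/2, 0) (1/2)" "Q s - Q 0 = Q s0 - Q 0"
      "Re (N s0 - N 0) \<le> Re (N s - N 0)"
    using sphere_point_in_fibre_above[of "\<lambda>s. Q s - Q 0" "\<lambda>s. Re (N s - N 0)"]
      linear_bloch_form_diff unfolding Q_def by blast
  obtain a b where ab: "(cmod a)\<^sup>2 + (cmod b)\<^sup>2 = 1" "bloch_coords a b = s"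
    using bloch_coords_onto_sphere[OF s(1)] .
  define w where "w = a *s e1 + b *s e2"
  show thesis
  proof
    have "(norm w)\<^sup>2 = 1"
      using norm_orthonormal_combination[OF e, of a b] ab(1) by (simp add: w_def)
    then show "norm w = 1"
      by (smt (verit) norm_ge_zero power2_eq_1_iff)
    have "cquad_form A w = Q s"
      unfolding w_def Q_def ab(2)[symmetric] by (rule cquad_form_eq_bloch_form[OF ab(1)])
    also have "\<dots> = Q s0"
      using s(2) by simp
    also have "\<dots> = of_real (1 - t) * cquad_form A x + of_real t * cquad_form A y"
      unfolding s0_def Q_def bloch_form_convex_combination x(1) y(1)
      by (simp add: cquad_form_eq_bloch_form x(2) y(2))
    finally show "cquad_form A w = of_real (1 - t) * cquad_form A x + of_real t * cquad_form A y" .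
    have "(1 - t) * (norm (A *v x))\<^sup>2 + t * (norm (A *v y))\<^sup>2 = Re (N s0)"
      unfolding s0_def N_def bloch_form_convex_combination x(1) y(1)
      by (simp add: norm_matrix_vector_eq_bloch_form x(2) y(2))
    also have "\<dots> \<le> Re (N s)"
      using s(3) by simp
    also have "\<dots> = (norm (A *v w))\<^sup>2"
      unfolding w_def N_def ab(2)[symmetric]
      by (rule norm_matrix_vector_eq_bloch_form[OF ab(1), symmetric])
    finally show "(1 - t) * (norm (A *v x))\<^sup>2 + t * (norm (A *v y))\<^sup>2 \<le> (norm (A *v w))\<^sup>2" .
  qed
qed

lemma unit_vector_orthogonal_decomposition:
  assumes "norm x = 1" and "norm y = 1"
  obtains (parallel) \<sigma> where "cmod \<sigma> = 1" and "y = \<sigma> *s x"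
    | (orthogonal) e \<sigma> \<beta> where "cinner x e = 0" and "cinner e e = 1"
      and "(cmod \<sigma>)\<^sup>2 + (cmod \<beta>)\<^sup>2 = 1" and "y = \<sigma> *s x + \<beta> *s e"
proof -
  define \<sigma> where "\<sigma> = cinner x y"
  define z where "z = y - \<sigma> *s x"
  have xx: "cinner x x = 1"
    using assms(1) by (simp add: cinner_self)
  have y: "y = \<sigma> *s x + z"
    by (simp add: z_def)
  have "cinner x z = 0"
    using y[THEN arg_cong, of "cinner x"] xx by (simp add: cinner_add_right cinner_smult_right \<sigma>_def)
  show thesis
  proof (cases "z = 0")
    case True
    then have "y = \<sigma> *s x"
      using y by simp
    moreover from this have "cmod \<sigma> = 1"
      using assms by (simp add: norm_smult_vec)
    ultimately show thesis
      using parallel by blast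
  next
    case False
    define e where "e = of_real (1 / norm z) *s z"
    have xe: "cinner x e = 0"
      using \<open>cinner x z = 0\<close> by (simp add: e_def cinner_smult_right)
    have "norm e = 1"
      using False by (simp add: e_def norm_smult_vec norm_divide)
    then have ee: "cinner e e = 1"
      by (simp add: cinner_self)
    have y': "y = \<sigma> *s x + of_real (norm z) *s e"
      using False y by (simp add: e_def vec_eq_iff)
    have "(cmod \<sigma>)\<^sup>2 + (cmod (of_real (norm z)))\<^sup>2 = 1"
      using norm_orthonormal_combination[OF xx ee xe, of \<sigma> "of_real (norm z)"] assms(2) y'
      by simp
    then show thesis
      using orthogonal[OF xe ee _ y'] by blast
  qed
qed

lemma unit_vectors_interpolation:
  fixes A :: "complex^'n^'n"
  assumes "norm x = 1" and "norm y = 1" and "0 \<le> t" and "t \<le> 1"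
  obtains w where "norm w = 1"
    and "cquad_form A w = of_real (1 - t) * cquad_form A x + of_real t * cquad_form A y"
    and "(1 - t) * (norm (A *v x))\<^sup>2 + t * (norm (A *v y))\<^sup>2 \<le> (norm (A *v w))\<^sup>2"
  using assms(1,2)
proof (cases rule: unit_vector_orthogonal_decomposition)
  case (parallel \<sigma>)
  have "cquad_form A y = cquad_form A x"
    using parallel by (simp add: cquad_form_eq_cinner vector_scalar_commute cinner_smult_left
        cinner_smult_right complex_norm_square[symmetric])
  moreover have "norm (A *v y) = norm (A *v x)"
    using parallel by (simp add: vector_scalar_commute norm_smult_vec)
  ultimately show thesis
    using assms(1) by (intro that[of x]) (simp_all add: algebra_simps flip: distrib_right)
next
  case (orthogonal e \<sigma> \<beta>)
  have "cinner x x = 1"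
    using assms(1) by (simp add: cinner_self)
  moreover have "x = 1 *s x + 0 *s e" and "(cmod 1)\<^sup>2 + (cmod 0)\<^sup>2 = 1"
    by simp_all
  ultimately show thesis
    using orthonormal_span_interpolation[OF _ orthogonal(2,1) _ _ orthogonal(4,3) assms(3,4)] that
    by blast
qed

lemma W_ge_eq_image:
  "W_ge r A =
    (\<lambda>x. (Re (cquad_form A x), Im (cquad_form A x))) ` {x. norm x = 1 \<and> r \<le> norm (A *v x)}"
proof -
  have height: "(\<exists>h\<ge>r. h\<^sup>2 = c\<^sup>2) \<longleftrightarrow> r \<le> c" if "0 \<le> c" for c :: real
    using that by (metis abs_le_square_iff abs_of_nonneg order.trans abs_ge_self)
  have "W_ge r A = {(Re (cquad_form A x), Im (cquad_form A x)) | x.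
      norm x = 1 \<and> (\<exists>h\<ge>r. h\<^sup>2 = (norm (A *v x))\<^sup>2)}"
    unfolding W_ge_def DW_shell_def by blast
  also have "\<dots> = (\<lambda>x. (Re (cquad_form A x), Im (cquad_form A x))) `
      {x. norm x = 1 \<and> r \<le> norm (A *v x)}"
    by (auto simp only: height norm_ge_zero)
  finally show ?thesis .
qed

lemma compact_W_ge: "compact (W_ge r A)"
proof -
  have "{x. norm x = 1 \<and> r \<le> norm (A *v x)} = sphere 0 1 \<inter> {x. r \<le> norm (A *v x)}"
    by (rule set_eqI) (simp only: mem_sphere_0 Int_iff mem_Collect_eq)
  also have "compact \<dots>"
    by (intro compact_Int_closed compact_sphere closed_Collect_le)
      (auto simp: matrix_vector_mult_def intro!: continuous_intros)
  finally have K: "compact {x. norm x = 1 \<and> r \<le> norm (A *v x)}" .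
  have "continuous_on UNIV (\<lambda>x. (Re (cquad_form A x), Im (cquad_form A x)))"
    by (auto simp: cquad_form_def matrix_vector_mult_def intro!: continuous_intros)
  then show ?thesis
    unfolding W_ge_eq_image using compact_continuous_image[OF continuous_on_subset K] by blast
qed

lemma convex_W_ge:
  fixes A :: "complex^'n^'n"
  shows "convex (W_ge r A)"
proof -
  define f where "f x = (Re (cquad_form A x), Im (cquad_form A x))" for x :: "complex^'n"
  define K where "K = {x. norm x = 1 \<and> r \<le> norm (A *v x)}"
  have "(1 - t) *\<^sub>R f x + t *\<^sub>R f y \<in> f ` K"
    if x: "x \<in> K" and y: "y \<in> K" and t: "0 \<le> t" "t \<le> 1" for x y t
  proof -
    obtain w where w: "norm w = 1"
        "cquad_form A w = of_real (1 - t) * cquad_form A x + of_real t * cquad_form A y"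
        "(1 - t) * (norm (A *v x))\<^sup>2 + t * (norm (A *v y))\<^sup>2 \<le> (norm (A *v w))\<^sup>2"
      using unit_vectors_interpolation[of x y t A] x y t unfolding K_def mem_Collect_eq by blast
    have "r \<le> norm (A *v w)"
    proof (cases "r \<le> 0")
      case False
      then have "r\<^sup>2 \<le> (norm (A *v x))\<^sup>2" "r\<^sup>2 \<le> (norm (A *v y))\<^sup>2"
        using x y by (simp_all add: K_def power_mono)
      then have "(1 - t) * r\<^sup>2 + t * r\<^sup>2 \<le> (1 - t) * (norm (A *v x))\<^sup>2 + t * (norm (A *v y))\<^sup>2"
        using t by (intro add_mono mult_left_mono) simp_all
      also have "\<dots> \<le> (norm (A *v w))\<^sup>2"
        by (rule w(3))
      finally have "r\<^sup>2 \<le> (norm (A *v w))\<^sup>2"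
        by (simp add: left_diff_distrib)
      then show ?thesis
        by (rule power2_le_imp_le) simp
    qed (simp add: order_trans)
    then show ?thesis
      using w(1,2) by (intro image_eqI[of _ _ w]) (simp_all add: f_def K_def)
  qed
  moreover have "W_ge r A = f ` K"
    unfolding f_def K_def by (rule W_ge_eq_image)
  ultimately show ?thesis
    unfolding convex_alt by (metis (no_types, lifting) imageE)
qed

theorem proposition1:
  fixes A :: "complex^'n^'n" and r :: real
  shows "compact (W_ge r A) \<and> convex (W_ge r A)"
  using compact_W_ge convex_W_ge by blast

end
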